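(* Let $\mu>0$, $\sigma\ge0$, and let $\mathbb{F}^{=}_{\mu,\sigma}$ be the class of distributions of nonnegative random variables with mean $\mu$ and standard deviation exactly $\sigma$. Then for every probability distribution $A$ over nonnegative prices, \[\sup_{F\in\mathbb{F}_{\mu,\sigma}}\frac{\mathrm{OPT}(F)}{\mathrm{REV}(A;F)}=\sup_{F\in\mathbb{F}^{=}_{\mu,\sigma}}\frac{\mathrm{OPT}(F)}{\mathrm{REV}(A;F)},\] and consequently \[\inf_A\sup_{F\in\mathbb{F}_{\mu,\sigma}}\frac{\mathrm{OPT}(F)}{\mathrm{REV}(A;F)}=\inf_A\sup_{F\in\mathbb{F}^{=}_{\mu,\sigma}}\frac{\mathrm{OPT}(F)}{\mathrm{REV}(A;F)}.\]
   Context: A nonnegative real random variable is $(\mu,\sigma)$-distributed if its expectation is $\mu$ and its standard deviation is at most $\sigma$; $\mathbb{F}_{\mu,\sigma}$ is the class of such distributions. Single item, single buyer with value $X\sim F$; a (possibly randomized) truthful mechanism is identified with a distribution $A$ over prices $p\ge0$. $\mathrm{REV}(p;F)=p\Pr[X\ge p]$, $\mathrm{REV}(A;F)=\mathbb{E}_{p\sim A}[\mathrm{REV}(p;F)]$, $\mathrm{OPT}(F)=\sup_{p\ge0}\mathrm{REV}(p;F)$. Ratios with zero denominator are interpreted as $+\infty$. *)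

theory Defs
  imports "HOL-Probability.Probability"
begin

definition nonneg_dist :: "real measure \<Rightarrow> bool" where
  "nonneg_dist M \<longleftrightarrow> prob_space M \<and> sets M = sets borel \<and> (AE x in M. 0 \<le> x)"

text \<open>(mu,sigma)-distributed: mean mu, standard deviation at most sigma
  (variance, possibly infinite, at most sigma^2).\<close>
definition F_class :: "real \<Rightarrow> real \<Rightarrow> real measure set" where
  "F_class \<mu> \<sigma> = {F. nonneg_dist F \<and> integrable F (\<lambda>x. x) \<and> (\<integral>x. x \<partial>F) = \<mu> \<and>
      (\<integral>\<^sup>+ x. ennreal ((x - \<mu>)\<^sup>2) \<partial>F) \<le> ennreal (\<sigma>\<^sup>2)}"

definition F_class_eq :: "real \<Rightarrow> real \<Rightarrow> real measure set" where
  "F_class_eq \<mu> \<sigma> = {F. nonneg_dist F \<and> integrable F (\<lambda>x. x) \<and> (\<integral>x. x \<partial>F) = \<mu> \<and>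
      (\<integral>\<^sup>+ x. ennreal ((x - \<mu>)\<^sup>2) \<partial>F) = ennreal (\<sigma>\<^sup>2)}"

definition REV_price :: "real \<Rightarrow> real measure \<Rightarrow> real" where
  "REV_price p F = p * measure F {x. p \<le> x}"

definition REV :: "real measure \<Rightarrow> real measure \<Rightarrow> ennreal" where
  "REV A F = (\<integral>\<^sup>+ p. ennreal (REV_price p F) \<partial>A)"

definition OPT :: "real measure \<Rightarrow> ennreal" where
  "OPT F = (SUP p\<in>{0..}. ennreal (REV_price p F))"

definition ratio :: "real measure \<Rightarrow> real measure \<Rightarrow> ennreal" where
  "ratio A F = (if REV A F = 0 then \<top> else OPT F / REV A F)"

end

theory Submission
  imports Defs
begin

text \<open>Let \<open>F\<close> have mean \<open>\<mu>\<close> and standard deviation \<open>s < \<sigma>\<close>. Mixing \<open>F\<close> with weight \<open>e\<close>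
  with a two-point distribution on \<open>{0, b}\<close> of mean \<open>\<mu>\<close> and large enough variance yields a
  distribution \<open>F'\<close> with mean \<open>\<mu>\<close> and standard deviation exactly \<open>\<sigma>\<close>. Revenue is linear in
  the distribution, so \<open>OPT F' \<ge> (1 - e) OPT F\<close>, while by Markov's inequality the two-point part
  contributes at most \<open>e \<mu>\<close> to the revenue of any mechanism \<open>A\<close>. Hence the ratio of \<open>A\<close> at \<open>F'\<close>
  is at least \<open>OPT F / (REV A F + \<delta>)\<close> with \<open>\<delta> \<rightarrow> 0\<close> as \<open>e \<rightarrow> 0\<close>, so the supremum over the
  larger class is already attained in the limit over the smaller one.\<close>

definition mixture :: "real \<Rightarrow> 'a measure \<Rightarrow> 'a measure \<Rightarrow> 'a measure" where
  "mixture e M N = measure_pmf (bernoulli_pmf e) \<bind> (\<lambda>c. if c then N else M)"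

locale prob_mixture =
  fixes e :: real and M N :: "'a measure"
  assumes weight_nonneg: "0 \<le> e" and weight_le_1: "e \<le> 1"
    and prob_M: "prob_space M" and prob_N: "prob_space N"
    and sets_N: "sets N = sets M"
begin

lemma mixture_kernel:
  "(\<lambda>c. if c then N else M) \<in> measurable (measure_pmf (bernoulli_pmf e)) (subprob_algebra M)"
  using prob_M prob_N sets_N by (auto simp: space_subprob_algebra prob_space_imp_subprob_space)

lemma sets_mixture [measurable_cong]: "sets (mixture e M N) = sets M"
  unfolding mixture_def using sets_N by (subst sets_bind) auto

lemma space_mixture: "space (mixture e M N) = space M"
  using sets_eq_imp_space_eq[OF sets_mixture] .

lemma nn_integral_mixture:
  assumes "f \<in> borel_measurable M"
  shows "(\<integral>\<^sup>+x. f x \<partial>mixture e M N)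
    = ennreal (1 - e) * (\<integral>\<^sup>+x. f x \<partial>M) + ennreal e * (\<integral>\<^sup>+x. f x \<partial>N)"
proof -
  have "(\<integral>\<^sup>+x. f x \<partial>mixture e M N)
      = (\<integral>\<^sup>+c. \<integral>\<^sup>+y. f y \<partial>(if c then N else M) \<partial>measure_pmf (bernoulli_pmf e))"
    unfolding mixture_def by (rule nn_integral_bind[OF assms mixture_kernel])
  also have "\<dots> = (\<integral>\<^sup>+y. f y \<partial>N) * ennreal e + (\<integral>\<^sup>+y. f y \<partial>M) * ennreal (1 - e)"
    using weight_nonneg weight_le_1 by (subst nn_integral_bernoulli_pmf) auto
  finally show ?thesis by (simp add: mult.commute add.commute)
qed

lemma emeasure_mixture:
  assumes "S \<in> sets M"
  shows "emeasure (mixture e M N) S = ennreal (1 - e) * emeasure M S + ennreal e * emeasure N S"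
  using nn_integral_mixture[of "indicator S"] assms sets_N sets_mixture
  by (simp add: nn_integral_indicator)

lemma prob_space_mixture: "prob_space (mixture e M N)"
proof
  have "emeasure (mixture e M N) (space M) = ennreal (1 - e) + ennreal e"
    using emeasure_mixture[of "space M"] prob_space.emeasure_space_1[OF prob_M]
      prob_space.emeasure_space_1[OF prob_N] sets_eq_imp_space_eq[OF sets_N] by simp
  also have "\<dots> = 1"
    using weight_nonneg weight_le_1 by (simp flip: ennreal_plus)
  finally show "emeasure (mixture e M N) (space (mixture e M N)) = 1"
    by (simp add: space_mixture)
qed

lemma measure_mixture:
  assumes "S \<in> sets M"
  shows "measure (mixture e M N) S = (1 - e) * measure M S + e * measure N S"
proof -
  have "ennreal (measure (mixture e M N) S) = ennreal ((1 - e) * measure M S + e * measure N S)"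
    using emeasure_mixture[OF assms] weight_nonneg weight_le_1
      finite_measure.emeasure_eq_measure[OF prob_space.finite_measure, OF prob_space_mixture]
      finite_measure.emeasure_eq_measure[OF prob_space.finite_measure, OF prob_M]
      finite_measure.emeasure_eq_measure[OF prob_space.finite_measure, OF prob_N]
    by (simp add: ennreal_plus ennreal_mult)
  then show ?thesis
    using weight_nonneg weight_le_1 by (subst (asm) ennreal_inj) auto
qed

lemma AE_mixture:
  assumes "Measurable.pred M P" "AE x in M. P x" "AE x in N. P x"
  shows "AE x in mixture e M N. P x"
  unfolding mixture_def using assms
  by (subst AE_bind[OF mixture_kernel]) (auto simp: AE_measure_pmf_iff)

end

lemma nonneg_dist_mixture:
  assumes M: "nonneg_dist M" and N: "nonneg_dist N" and "0 \<le> e" "e \<le> 1"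
  shows "nonneg_dist (mixture e M N)"
proof -
  interpret prob_mixture e M N
    using assms by (intro prob_mixture.intro) (auto simp: nonneg_dist_def)
  have [measurable_cong]: "sets M = sets borel"
    using M by (simp add: nonneg_dist_def)
  have "Measurable.pred M (\<lambda>x. 0 \<le> x)"
    by measurable
  then have "AE x in mixture e M N. 0 \<le> x"
    using M N by (intro AE_mixture) (auto simp: nonneg_dist_def)
  then show ?thesis
    using M prob_space_mixture sets_mixture by (simp add: nonneg_dist_def)
qed

definition two_point :: "real \<Rightarrow> real \<Rightarrow> real \<Rightarrow> real measure" where
  "two_point q a b = mixture q (return borel a) (return borel b)"

lemma
  assumes "0 \<le> q" "q \<le> 1"
  shows nonneg_dist_two_point: "0 \<le> a \<Longrightarrow> 0 \<le> b \<Longrightarrow> nonneg_dist (two_point q a b)"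
    and nn_integral_two_point: "f \<in> borel_measurable borel \<Longrightarrow>
      (\<integral>\<^sup>+x. f x \<partial>two_point q a b) = ennreal (1 - q) * f a + ennreal q * f b"
proof -
  interpret prob_mixture q "return borel a" "return borel b"
    using assms by (intro prob_mixture.intro) (simp_all add: prob_space_return)
  show "nonneg_dist (two_point q a b)" if "0 \<le> a" "0 \<le> b"
    unfolding two_point_def using assms that
    by (intro nonneg_dist_mixture) (auto simp: nonneg_dist_def prob_space_return AE_return)
  show "(\<integral>\<^sup>+x. f x \<partial>two_point q a b) = ennreal (1 - q) * f a + ennreal q * f b"
    if "f \<in> borel_measurable borel"
    unfolding two_point_def using that by (simp add: nn_integral_mixture nn_integral_return)
qed

lemma nonneg_dist_mean_iff:
  assumes F: "nonneg_dist F" and "0 \<le> \<mu>"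
  shows "integrable F (\<lambda>x. x) \<and> (\<integral>x. x \<partial>F) = \<mu> \<longleftrightarrow> (\<integral>\<^sup>+x. ennreal x \<partial>F) = ennreal \<mu>"
proof -
  have [measurable_cong]: "sets F = sets borel" and nonneg: "AE x in F. 0 \<le> x"
    using F by (auto simp: nonneg_dist_def)
  show ?thesis
  proof
    assume "integrable F (\<lambda>x. x) \<and> (\<integral>x. x \<partial>F) = \<mu>"
    then show "(\<integral>\<^sup>+x. ennreal x \<partial>F) = ennreal \<mu>"
      using nonneg by (subst nn_integral_eq_integral) auto
  next
    assume mean: "(\<integral>\<^sup>+x. ennreal x \<partial>F) = ennreal \<mu>"
    have "integrable F (\<lambda>x. x)"
      using nonneg mean by (intro integrableI_nonneg) auto
    moreover have "(\<integral>x. x \<partial>F) = \<mu>"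
      using nonneg mean \<open>0 \<le> \<mu>\<close> by (subst integral_eq_nn_integral) auto
    ultimately show "integrable F (\<lambda>x. x) \<and> (\<integral>x. x \<partial>F) = \<mu>" ..
  qed
qed

lemma F_class_eq_iff:
  assumes "0 \<le> \<mu>"
  shows "F \<in> F_class_eq \<mu> \<sigma> \<longleftrightarrow> nonneg_dist F \<and> (\<integral>\<^sup>+x. ennreal x \<partial>F) = ennreal \<mu> \<and>
    (\<integral>\<^sup>+x. ennreal ((x - \<mu>)\<^sup>2) \<partial>F) = ennreal (\<sigma>\<^sup>2)"
  using nonneg_dist_mean_iff[OF _ assms] by (auto simp: F_class_eq_def)

lemma F_class_eq_subset: "F_class_eq \<mu> \<sigma> \<subseteq> F_class \<mu> \<sigma>"
  by (auto simp: F_class_def F_class_eq_def)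

lemma F_class_imp_F_class_eq:
  assumes "F \<in> F_class \<mu> \<sigma>" "0 \<le> \<sigma>"
  obtains s where "0 \<le> s" "s \<le> \<sigma>" "F \<in> F_class_eq \<mu> s"
proof -
  have "(\<integral>\<^sup>+x. ennreal ((x - \<mu>)\<^sup>2) \<partial>F) \<le> ennreal (\<sigma>\<^sup>2)"
    using assms(1) by (simp add: F_class_def)
  then obtain v where v: "(\<integral>\<^sup>+x. ennreal ((x - \<mu>)\<^sup>2) \<partial>F) = ennreal v" "0 \<le> v" "v \<le> \<sigma>\<^sup>2"
    by (cases "\<integral>\<^sup>+x. ennreal ((x - \<mu>)\<^sup>2) \<partial>F") (auto simp: top_unique ennreal_le_iff)
  show ?thesis
  proof
    show "sqrt v \<le> \<sigma>"
      using v(3) assms(2) real_sqrt_le_mono[of v "\<sigma>\<^sup>2"] by simp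
    show "F \<in> F_class_eq \<mu> (sqrt v)"
      using assms(1) v by (simp add: F_class_def F_class_eq_def)
  qed (use v in simp)
qed

lemma two_point_in_F_class_eq:
  assumes "0 < \<mu>"
  shows "two_point (\<mu>\<^sup>2 / (t\<^sup>2 + \<mu>\<^sup>2)) 0 ((t\<^sup>2 + \<mu>\<^sup>2) / \<mu>) \<in> F_class_eq \<mu> t"
proof -
  define q where "q = \<mu>\<^sup>2 / (t\<^sup>2 + \<mu>\<^sup>2)"
  define b where "b = (t\<^sup>2 + \<mu>\<^sup>2) / \<mu>"
  have pos: "0 < t\<^sup>2 + \<mu>\<^sup>2"
    using assms by (simp add: add_nonneg_pos)
  have q: "0 \<le> q" "q \<le> 1" and b: "0 \<le> b"
    using pos assms by (auto simp: q_def b_def)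
  have mean: "q * b = \<mu>"
    using pos assms by (simp add: q_def b_def power2_eq_square)
  have "(1 - q) * \<mu>\<^sup>2 + q * (b - \<mu>)\<^sup>2 = \<mu>\<^sup>2 - 2 * \<mu> * (q * b) + (q * b) * b"
    by (simp add: power2_eq_square algebra_simps)
  also have "\<dots> = \<mu> * b - \<mu>\<^sup>2"
    by (simp add: mean power2_eq_square)
  also have "\<dots> = t\<^sup>2"
    using assms by (simp add: b_def)
  finally have var: "(1 - q) * \<mu>\<^sup>2 + q * (b - \<mu>)\<^sup>2 = t\<^sup>2" .
  have "(\<integral>\<^sup>+x. ennreal x \<partial>two_point q 0 b) = ennreal (q * b)"
    using q by (simp add: nn_integral_two_point ennreal_mult')
  moreover have "(\<integral>\<^sup>+x. ennreal ((x - \<mu>)\<^sup>2) \<partial>two_point q 0 b)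
      = ennreal ((1 - q) * \<mu>\<^sup>2 + q * (b - \<mu>)\<^sup>2)"
    using q by (simp add: nn_integral_two_point ennreal_mult ennreal_plus)
  ultimately show ?thesis
    using assms q b mean var nonneg_dist_two_point
    by (simp add: F_class_eq_iff flip: q_def b_def)
qed

lemma mixture_in_F_class_eq:
  assumes F: "F \<in> F_class_eq \<mu> s" and G: "G \<in> F_class_eq \<mu> t"
    and e: "0 \<le> e" "e \<le> 1" and "0 \<le> \<mu>"
    and \<sigma>: "\<sigma>\<^sup>2 = (1 - e) * s\<^sup>2 + e * t\<^sup>2"
  shows "mixture e F G \<in> F_class_eq \<mu> \<sigma>"
proof -
  have dist: "nonneg_dist F" "nonneg_dist G"
    using F G by (auto simp: F_class_eq_def)
  interpret prob_mixture e F G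
    using dist e by (intro prob_mixture.intro) (auto simp: nonneg_dist_def)
  have [measurable_cong]: "sets F = sets borel"
    using dist(1) by (simp add: nonneg_dist_def)
  have "(\<integral>\<^sup>+x. ennreal x \<partial>mixture e F G)
      = ennreal (1 - e) * (\<integral>\<^sup>+x. ennreal x \<partial>F) + ennreal e * (\<integral>\<^sup>+x. ennreal x \<partial>G)"
    by (rule nn_integral_mixture) measurable
  also have "\<dots> = ennreal ((1 - e) * \<mu> + e * \<mu>)"
    using F G e \<open>0 \<le> \<mu>\<close> by (simp add: F_class_eq_iff ennreal_mult ennreal_plus)
  finally have mean: "(\<integral>\<^sup>+x. ennreal x \<partial>mixture e F G) = ennreal \<mu>"
    by (simp add: algebra_simps)
  have "(\<integral>\<^sup>+x. ennreal ((x - \<mu>)\<^sup>2) \<partial>mixture e F G)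
      = ennreal (1 - e) * (\<integral>\<^sup>+x. ennreal ((x - \<mu>)\<^sup>2) \<partial>F)
        + ennreal e * (\<integral>\<^sup>+x. ennreal ((x - \<mu>)\<^sup>2) \<partial>G)"
    by (rule nn_integral_mixture) measurable
  also have "\<dots> = ennreal (\<sigma>\<^sup>2)"
    using F G e \<open>0 \<le> \<mu>\<close> unfolding \<sigma> by (simp add: F_class_eq_iff ennreal_mult ennreal_plus)
  finally show ?thesis
    using nonneg_dist_mixture[OF dist e] mean \<open>0 \<le> \<mu>\<close> by (simp add: F_class_eq_iff)
qed

lemma REV_price_nonneg: "0 \<le> p \<Longrightarrow> 0 \<le> REV_price p F"
  by (simp add: REV_price_def)

lemma REV_price_nonpos: "p \<le> 0 \<Longrightarrow> REV_price p F \<le> 0"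
  by (simp add: REV_price_def mult_nonpos_nonneg)

lemma REV_price_le_mean:
  assumes F: "nonneg_dist F" and int: "integrable F (\<lambda>x. x)"
  shows "REV_price p F \<le> (\<integral>x. x \<partial>F)"
proof (cases "p \<le> 0")
  case True
  have "0 \<le> (\<integral>x. x \<partial>F)"
    using F by (intro integral_nonneg_AE) (simp add: nonneg_dist_def)
  then show ?thesis
    using REV_price_nonpos[OF True, of F] by linarith
next
  case False
  have space: "space F = UNIV"
    using F sets_eq_imp_space_eq[of F borel] by (simp add: nonneg_dist_def)
  have "measure F {x \<in> space F. p \<le> x} \<le> (\<integral>x. x \<partial>F) / p"
    using F int False by (intro integral_Markov_inequality_measure[where A = "space F"])
      (auto simp: nonneg_dist_def)
  then show ?thesis
    using False by (simp add: REV_price_def space field_simps)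
qed

lemma REV_price_measurable:
  assumes "finite_measure F" "sets F = sets borel"
  shows "(\<lambda>p. REV_price p F) \<in> borel_measurable borel"
proof -
  interpret finite_measure F by (rule assms(1))
  have "mono (\<lambda>p. - measure F {x. p \<le> x})"
    by (rule monoI) (auto intro!: finite_measure_mono simp: assms(2))
  then have "(\<lambda>p. - measure F {x. p \<le> x}) \<in> borel_measurable borel"
    by (rule borel_measurable_mono)
  then have [measurable]: "(\<lambda>p. measure F {x. p \<le> x}) \<in> borel_measurable borel"
    using borel_measurable_uminus by fastforce
  show ?thesis
    unfolding REV_price_def by measurable
qed

lemma REV_price_mixture:
  assumes "nonneg_dist M" "nonneg_dist N" "0 \<le> e" "e \<le> 1"
  shows "REV_price p (mixture e M N) = (1 - e) * REV_price p M + e * REV_price p N"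
proof -
  interpret prob_mixture e M N
    using assms by (intro prob_mixture.intro) (auto simp: nonneg_dist_def)
  show ?thesis
    using assms(1) by (simp add: REV_price_def nonneg_dist_def measure_mixture algebra_simps)
qed

lemma OPT_le_mean:
  assumes "nonneg_dist F" "integrable F (\<lambda>x. x)"
  shows "OPT F \<le> ennreal (\<integral>x. x \<partial>F)"
  unfolding OPT_def using REV_price_le_mean[OF assms] by (intro SUP_least ennreal_leI) simp

lemma OPT_pos:
  assumes F: "prob_space F" "sets F = sets borel" and int: "integrable F (\<lambda>x. x)"
    and mean: "0 < (\<integral>x. x \<partial>F)"
  shows "0 < OPT F"
proof -
  interpret prob_space F by (rule F(1))
  define m where "m = (\<integral>x. x \<partial>F) / 2"
  have "0 < measure F {x. m \<le> x}"
  proof (rule ccontr)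
    assume "\<not> 0 < measure F {x. m \<le> x}"
    then have "measure F {x. m \<le> x} = 0"
      using measure_nonneg[of F] by (meson not_less order.antisym)
    then have "emeasure F {x. m \<le> x} = 0"
      by (simp add: emeasure_eq_measure)
    then have "AE x in F. x < m"
      using F(2) by (intro AE_I[where N = "{x. m \<le> x}"]) (auto simp: not_less)
    then have "(\<integral>x. x \<partial>F) \<le> (\<integral>x. m \<partial>F)"
      by (intro integral_mono_AE int) (auto elim!: eventually_mono)
    then show False
      using mean by (simp add: m_def prob_space)
  qed
  then have "0 < ennreal (REV_price m F)"
    using mean by (simp add: REV_price_def m_def)
  also have "ennreal (REV_price m F) \<le> OPT F"
    unfolding OPT_def using mean by (intro SUP_upper) (simp add: m_def)
  finally show ?thesis .
qed

lemma OPT_pos_F_class: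
  assumes "F \<in> F_class \<mu> \<sigma>" "0 < \<mu>"
  shows "0 < OPT F"
  using assms by (intro OPT_pos) (auto simp: F_class_def nonneg_dist_def)

lemma OPT_mixture_ge:
  assumes "nonneg_dist M" "nonneg_dist N" "0 \<le> e" "e \<le> 1"
  shows "ennreal (1 - e) * OPT M \<le> OPT (mixture e M N)"
  unfolding OPT_def SUP_mult_left_ennreal
proof (rule SUP_mono)
  fix p :: real assume p: "p \<in> {0..}"
  have "ennreal (1 - e) * ennreal (REV_price p M) = ennreal ((1 - e) * REV_price p M)"
    using assms(4) by (simp add: ennreal_mult')
  also have "\<dots> \<le> ennreal (REV_price p (mixture e M N))"
    using p assms by (intro ennreal_leI) (simp add: REV_price_mixture REV_price_nonneg)
  finally show "\<exists>p'\<in>{0..}. ennreal (1 - e) * ennreal (REV_price p M)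
      \<le> ennreal (REV_price p' (mixture e M N))"
    using p by blast
qed

lemma REV_mixture_le:
  assumes A: "nonneg_dist A" and M: "nonneg_dist M" and N: "nonneg_dist N"
    and int: "integrable N (\<lambda>x. x)" and e: "0 \<le> e" "e \<le> 1"
  shows "REV A (mixture e M N) \<le> ennreal (1 - e) * REV A M + ennreal (e * (\<integral>x. x \<partial>N))"
proof -
  define m where "m = (\<integral>x. x \<partial>N)"
  have "0 \<le> m"
    using N unfolding m_def by (intro integral_nonneg_AE) (simp add: nonneg_dist_def)
  have pointwise: "ennreal (REV_price p (mixture e M N))
      \<le> ennreal (1 - e) * ennreal (REV_price p M) + ennreal (e * m)" for p
  proof (cases "0 \<le> p")
    case True
    have "e * REV_price p N \<le> e * m"
      using REV_price_le_mean[OF N int, of p] e by (simp add: mult_left_mono m_def)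
    then have "REV_price p (mixture e M N) \<le> (1 - e) * REV_price p M + e * m"
      using REV_price_mixture[OF M N e] by simp
    then have "ennreal (REV_price p (mixture e M N)) \<le> ennreal ((1 - e) * REV_price p M + e * m)"
      by (rule ennreal_leI)
    also have "\<dots> = ennreal (1 - e) * ennreal (REV_price p M) + ennreal (e * m)"
      using True e \<open>0 \<le> m\<close> by (simp add: ennreal_mult ennreal_plus REV_price_nonneg)
    finally show ?thesis .
  qed (simp add: REV_price_nonpos ennreal_neg)
  have [measurable_cong]: "sets A = sets borel"
    using A by (simp add: nonneg_dist_def)
  have [measurable]: "(\<lambda>p. REV_price p M) \<in> borel_measurable borel"
    using M by (intro REV_price_measurable) (auto simp: nonneg_dist_def prob_space.finite_measure)
  have "(\<lambda>p. ennreal (REV_price p M)) \<in> borel_measurable A"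
    by measurable
  have "REV A (mixture e M N)
      \<le> (\<integral>\<^sup>+p. ennreal (1 - e) * ennreal (REV_price p M) + ennreal (e * m) \<partial>A)"
    unfolding REV_def by (intro nn_integral_mono pointwise)
  also have "\<dots> = ennreal (1 - e) * REV A M + ennreal (e * m)"
    using A \<open>(\<lambda>p. ennreal (REV_price p M)) \<in> borel_measurable A\<close>
    by (simp add: REV_def nn_integral_add nn_integral_cmult nonneg_dist_def
        prob_space.emeasure_space_1)
  finally show ?thesis
    unfolding m_def .
qed

lemma ennreal_inverse_antimono: "a \<le> b \<Longrightarrow> inverse b \<le> inverse (a :: ennreal)"
  including ennreal.lifting by transfer (simp add: ereal_inverse_antimono)

lemma ennreal_divide_mono: "a \<le> b \<Longrightarrow> d \<le> c \<Longrightarrow> a / c \<le> b / (d :: ennreal)"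
  by (simp add: divide_ennreal_def mult_mono ennreal_inverse_antimono)

lemma ennreal_divide_le_of_divide_add_le:
  fixes a b c :: ennreal
  assumes "a < \<top>" and le: "\<And>\<delta>. 0 < \<delta> \<Longrightarrow> a / (b + ennreal \<delta>) \<le> c"
  shows "a / b \<le> c"
proof -
  have "((\<lambda>\<delta>. b + ennreal \<delta>) \<longlongrightarrow> b + ennreal 0) (at_right 0)"
    by (intro tendsto_intros)
  then have "((\<lambda>\<delta>. b + ennreal \<delta>) \<longlongrightarrow> b) (at_right 0)"
    by (simp only: ennreal_0 add_0_right)
  then have "((\<lambda>\<delta>. inverse (b + ennreal \<delta>)) \<longlongrightarrow> inverse b) (at_right 0)"
    by (rule continuous_on_tendsto_compose
        [OF continuous_on_inverse_ennreal[OF continuous_on_id[of UNIV]]]) auto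
  then have "((\<lambda>\<delta>. a / (b + ennreal \<delta>)) \<longlongrightarrow> a / b) (at_right 0)"
    unfolding divide_ennreal_def by (rule ennreal_tendsto_cmult[OF \<open>a < \<top>\<close>])
  moreover have "\<forall>\<^sub>F \<delta> in at_right 0. a / (b + ennreal \<delta>) \<le> c"
    using eventually_at_right_less by (rule eventually_mono) (rule le)
  ultimately show ?thesis
    by (intro tendsto_le[OF trivial_limit_at_right_real tendsto_const])
qed

lemma ratio_eq_divide: "OPT F \<noteq> 0 \<Longrightarrow> ratio A F = OPT F / REV A F"
  by (simp add: ratio_def)

lemma exists_F_class_eq_ratio_ge:
  assumes \<mu>: "0 < \<mu>" and A: "nonneg_dist A" and F: "F \<in> F_class_eq \<mu> s"
    and s: "0 \<le> s" "s < \<sigma>" and \<delta>: "0 < \<delta>"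
  shows "\<exists>F'\<in>F_class_eq \<mu> \<sigma>. OPT F / (REV A F + ennreal \<delta>) \<le> ratio A F'"
proof -
  \<comment> \<open>the weight for which the Markov bound \<open>e * \<mu>\<close> on the revenue from \<open>G\<close> equals \<open>(1 - e) * \<delta>\<close>\<close>
  define e where "e = \<delta> / (\<mu> + \<delta>)"
  have e: "0 < e" "e < 1"
    using \<mu> \<delta> by (auto simp: e_def)
  have e_\<mu>: "e * \<mu> = (1 - e) * \<delta>"
    using \<mu> \<delta> by (simp add: e_def field_simps)
  define t where "t = sqrt ((\<sigma>\<^sup>2 - (1 - e) * s\<^sup>2) / e)"
  have "(1 - e) * s\<^sup>2 \<le> s\<^sup>2" "s\<^sup>2 < \<sigma>\<^sup>2"
    using e s by (auto simp: mult_left_le_one_le power_strict_mono)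
  then have \<sigma>: "\<sigma>\<^sup>2 = (1 - e) * s\<^sup>2 + e * t\<^sup>2"
    using e by (simp add: t_def)
  define G where "G = two_point (\<mu>\<^sup>2 / (t\<^sup>2 + \<mu>\<^sup>2)) 0 ((t\<^sup>2 + \<mu>\<^sup>2) / \<mu>)"
  have G: "G \<in> F_class_eq \<mu> t"
    unfolding G_def using \<mu> by (rule two_point_in_F_class_eq)
  have dist: "nonneg_dist F" "nonneg_dist G" and G_mean: "integrable G (\<lambda>x. x)" "(\<integral>x. x \<partial>G) = \<mu>"
    using F G by (auto simp: F_class_eq_def)
  define F' where "F' = mixture e F G"
  have F': "F' \<in> F_class_eq \<mu> \<sigma>"
    unfolding F'_def using F G e \<mu> \<sigma> by (intro mixture_in_F_class_eq) auto
  have OPT: "ennreal (1 - e) * OPT F \<le> OPT F'"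
    unfolding F'_def using dist e by (intro OPT_mixture_ge) auto
  have "REV A F' \<le> ennreal (1 - e) * REV A F + ennreal (e * \<mu>)"
    unfolding F'_def using REV_mixture_le[OF A dist G_mean(1)] e G_mean(2) by simp
  also have "\<dots> = ennreal (1 - e) * (REV A F + ennreal \<delta>)"
    using e by (simp add: e_\<mu> ennreal_mult' distrib_left)
  finally have REV: "REV A F' \<le> ennreal (1 - e) * (REV A F + ennreal \<delta>)" .
  have "OPT F' \<noteq> 0"
    using OPT_pos_F_class[of F' \<mu> \<sigma>] F' F_class_eq_subset[of \<mu> \<sigma>] \<mu> by auto
  then have "ratio A F' = OPT F' / REV A F'"
    by (rule ratio_eq_divide)
  moreover have "OPT F / (REV A F + ennreal \<delta>)
      = ennreal (1 - e) * OPT F / (ennreal (1 - e) * (REV A F + ennreal \<delta>))"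
    using e divide_mult_eq[of "ennreal (1 - e)" "OPT F" "REV A F + ennreal \<delta>"]
    by (simp add: mult.commute)
  ultimately have "OPT F / (REV A F + ennreal \<delta>) \<le> ratio A F'"
    using OPT REV by (simp add: ennreal_divide_mono)
  then show ?thesis
    using F' by blast
qed

lemma ratio_le_SUP_F_class_eq:
  assumes \<mu>: "0 < \<mu>" and "0 \<le> \<sigma>" and A: "nonneg_dist A" and F: "F \<in> F_class \<mu> \<sigma>"
  shows "ratio A F \<le> (SUP F'\<in>F_class_eq \<mu> \<sigma>. ratio A F')"
proof -
  obtain s where s: "0 \<le> s" "s \<le> \<sigma>" and F_eq: "F \<in> F_class_eq \<mu> s"
    using F_class_imp_F_class_eq[OF F \<open>0 \<le> \<sigma>\<close>] .
  show ?thesis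
  proof (cases "s = \<sigma>")
    case True
    then show ?thesis
      using F_eq by (auto intro: SUP_upper)
  next
    case False
    with s(2) have "s < \<sigma>"
      by simp
    have "OPT F \<le> ennreal \<mu>"
      using F OPT_le_mean[of F] by (auto simp: F_class_def)
    then have "OPT F < \<top>"
      using order.strict_trans1 by fastforce
    have "ratio A F = OPT F / REV A F"
      using OPT_pos_F_class[OF F \<mu>] by (intro ratio_eq_divide) simp
    also have "\<dots> \<le> (SUP F'\<in>F_class_eq \<mu> \<sigma>. ratio A F')"
    proof (rule ennreal_divide_le_of_divide_add_le[OF \<open>OPT F < \<top>\<close>])
      fix \<delta> :: real assume "0 < \<delta>"
      then obtain F' where "F' \<in> F_class_eq \<mu> \<sigma>" "OPT F / (REV A F + ennreal \<delta>) \<le> ratio A F'"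
        using exists_F_class_eq_ratio_ge[OF \<mu> A F_eq s(1) \<open>s < \<sigma>\<close>] by blast
      then show "OPT F / (REV A F + ennreal \<delta>) \<le> (SUP F'\<in>F_class_eq \<mu> \<sigma>. ratio A F')"
        by (blast intro: SUP_upper2)
    qed
    finally show ?thesis .
  qed
qed

theorem lemma5:
  fixes \<mu> \<sigma> :: real
  assumes "\<mu> > 0" and "\<sigma> \<ge> 0"
  shows "(\<forall>A. nonneg_dist A \<longrightarrow>
            (SUP F\<in>F_class \<mu> \<sigma>. ratio A F) = (SUP F\<in>F_class_eq \<mu> \<sigma>. ratio A F))
       \<and> (INF A\<in>{A. nonneg_dist A}. SUP F\<in>F_class \<mu> \<sigma>. ratio A F)
           = (INF A\<in>{A. nonneg_dist A}. SUP F\<in>F_class_eq \<mu> \<sigma>. ratio A F)"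
proof -
  have SUP_eq: "(SUP F\<in>F_class \<mu> \<sigma>. ratio A F) = (SUP F\<in>F_class_eq \<mu> \<sigma>. ratio A F)"
    if "nonneg_dist A" for A
  proof (rule order.antisym)
    show "(SUP F\<in>F_class \<mu> \<sigma>. ratio A F) \<le> (SUP F\<in>F_class_eq \<mu> \<sigma>. ratio A F)"
      using ratio_le_SUP_F_class_eq[OF assms that] by (rule SUP_least)
    show "(SUP F\<in>F_class_eq \<mu> \<sigma>. ratio A F) \<le> (SUP F\<in>F_class \<mu> \<sigma>. ratio A F)"
      by (rule SUP_subset_mono[OF F_class_eq_subset order.refl])
  qed
  then show ?thesis
    by (auto intro!: INF_cong)
qed

end
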